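(* Let $h\in C_\mathbb{R}(\mathcal{X}^n)$ and $\mu\in\mathrm{Prob}(\mathcal{X}^n)$ with marginals $\mu_1,\dots,\mu_n$, and for $1\le i\le n$ let $h_i(x)=\log\sum_{x_1,\dots,x_{i-1},x_{i+1},\dots,x_n\in\mathcal{X}}e^{h(x_1,\dots,x_{i-1},x,x_{i+1},\dots,x_n)}$, $x\in\mathcal{X}$. The following are equivalent: (i) $\mu$ is the Gibbs measure associated with $h$; (ii) $\mu$ is mutually equilibrium associated with $h$ and, for each $i$, $\mu_i$ is the Gibbs measure associated with $h_i$.
   Context: $\mathcal{X}=\{t_1,\dots,t_d\}$ is a finite set with a fixed order $t_1<\dots<t_d$; $n\in\mathbb{N}$. $\mathrm{Prob}(\mathcal{X}^k)$ is the set of probability measures on $\mathcal{X}^k$, $C_\mathbb{R}(\mathcal{X}^k)$ the real functions on $\mathcal{X}^k$; $\mu(h)=\sum_\mathbf{x}h(\mathbf{x})\mu(\mathbf{x})$. The pressure is $P(h)=\log\sum_{\mathbf{x}\in\mathcal{X}^k}e^{h(\mathbf{x})}$ and the Gibbs measure associated with $h$ is $\mathbf{x}\mapsto e^{h(\mathbf{x})-P(h)}$. For $\mathbf{x}\in\mathcal{X}^N$ its type is $\nu_\mathbf{x}(t)=\#\{j:x_j=t\}/N$. $\mathcal{X}_\le^N$ is the set of sequences in $\mathcal{X}^N$ of the form $(t_1,\dots,t_1,\dots,t_d,\dots,t_d)$. $S_N$ acts by $\sigma(\mathbf{x})=(x_{\sigma^{-1}(1)},\dots,x_{\sigma^{-1}(N)})$.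 An approximating sequence for $(\mu_1,\dots,\mu_n)$ is $\Xi(N)=(\xi_1(N),\dots,\xi_n(N))$ with $\xi_i(N)\in\mathcal{X}_\le^N$ and $\nu_{\xi_i(N)}(t)\to\mu_i(t)$ for all $t$. For $h\in C_\mathbb{R}(\mathcal{X}^n)$ and $\mathbf{x}_i=(x_{i1},\dots,x_{iN})$, $\kappa_N(h(\mathbf{x}_1,\dots,\mathbf{x}_n))=\frac1N\sum_{j=1}^Nh(x_{1j},\dots,x_{nj})$. The mutual pressure is $$P_\mathrm{sym}(h:\mu_1,\dots,\mu_n)=\limsup_{N\to\infty}\frac1N\log\Biggl[\frac1{(N!)^n}\sum_{\sigma_1,\dots,\sigma_n\in S_N}\exp\bigl(N\kappa_N(h(\sigma_1(\xi_1(N)),\dots,\sigma_n(\xi_n(N))))\bigr)\Biggr]$$ (independent of the approximating sequence). $\mathcal{I}_\mathrm{sym}(\mu)=\sup\{\mu(h)-P_\mathrm{sym}(h:\mu_1,\dots,\mu_n):h\in C_\mathbb{R}(\mathcal{X}^n)\}$, and $\mu$ is mutually equilibrium associated with $h$ if $\mathcal{I}_\mathrm{sym}(\mu)=\mu(h)-P_\mathrm{sym}(h:\mu_1,\dots,\mu_n)$. *)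

theory Defs
  imports "HOL-Analysis.Analysis" "HOL-Combinatorics.Permutations"
begin

text \<open>The finite alphabet X is a finite linearly ordered type 'a; X^n is the
  function type 'i \<Rightarrow> 'a for a finite index type 'i with CARD('i) = n.\<close>

definition is_prob :: "('b::finite \<Rightarrow> real) \<Rightarrow> bool" where
  "is_prob \<mu> \<longleftrightarrow> (\<forall>x. 0 \<le> \<mu> x) \<and> (\<Sum>x\<in>UNIV. \<mu> x) = 1"

definition integ :: "('b::finite \<Rightarrow> real) \<Rightarrow> ('b \<Rightarrow> real) \<Rightarrow> real" where
  "integ \<mu> h = (\<Sum>x\<in>UNIV. h x * \<mu> x)"

definition pressure :: "('b::finite \<Rightarrow> real) \<Rightarrow> real" where
  "pressure h = ln (\<Sum>x\<in>UNIV. exp (h x))"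

definition gibbs :: "('b::finite \<Rightarrow> real) \<Rightarrow> 'b \<Rightarrow> real" where
  "gibbs h x = exp (h x - pressure h)"

definition marginal :: "(('i::finite \<Rightarrow> 'a::finite) \<Rightarrow> real) \<Rightarrow> 'i \<Rightarrow> 'a \<Rightarrow> real" where
  "marginal \<mu> i t = (\<Sum>x\<in>{x. x i = t}. \<mu> x)"

definition hmarg :: "(('i::finite \<Rightarrow> 'a::finite) \<Rightarrow> real) \<Rightarrow> 'i \<Rightarrow> 'a \<Rightarrow> real" where
  "hmarg h i t = ln (\<Sum>x\<in>{x. x i = t}. exp (h x))"

definition seq_type :: "'a list \<Rightarrow> 'a \<Rightarrow> real" where
  "seq_type xs t = real (count_list xs t) / real (length xs)"

definition approx_seq :: "(nat \<Rightarrow> 'i \<Rightarrow> 'a::linorder list) \<Rightarrow> ('i \<Rightarrow> 'a \<Rightarrow> real) \<Rightarrow> bool" where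
  "approx_seq \<xi> \<mu>s \<longleftrightarrow>
     (\<forall>N i. length (\<xi> N i) = N \<and> sorted (\<xi> N i)) \<and>
     (\<forall>i t. (\<lambda>N. seq_type (\<xi> N i) t) \<longlonglongrightarrow> \<mu>s i t)"

text \<open>The averaged partition function: (1/(N!)^n) \<Sum>_{\<sigma>_1..\<sigma>_n \<in> S_N}
  exp(N \<kappa>_N(h(\<sigma>_1(\<xi>_1(N)),...,\<sigma>_n(\<xi>_n(N))))), where \<sigma>(x)_j = x_{\<sigma>^{-1}(j)}
  and permutations of {1..N} are represented as permutations of {0..<N}.\<close>
definition sym_partition :: "(('i::finite \<Rightarrow> 'a) \<Rightarrow> real) \<Rightarrow> (nat \<Rightarrow> 'i \<Rightarrow> 'a list) \<Rightarrow> nat \<Rightarrow> real" where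
  "sym_partition h \<xi> N =
     (1 / (fact N) ^ CARD('i)) *
     (\<Sum>s\<in>PiE UNIV (\<lambda>_. {\<sigma>. \<sigma> permutes {..<N}}).
        exp (\<Sum>j<N. h (\<lambda>i. \<xi> N i ! (inv (s i) j))))"

text \<open>Mutual pressure (as an extended real), computed along an approximating
  sequence (the paper asserts independence of the choice).\<close>
definition Psym :: "(('i::finite \<Rightarrow> 'a::{finite,linorder}) \<Rightarrow> real) \<Rightarrow> ('i \<Rightarrow> 'a \<Rightarrow> real) \<Rightarrow> ereal" where
  "Psym h \<mu>s = (let \<xi> = (SOME \<xi>. approx_seq \<xi> \<mu>s) in
      limsup (\<lambda>N. ereal (ln (sym_partition h \<xi> N) / real N)))"

definition Isym :: "(('i::finite \<Rightarrow> 'a::{finite,linorder}) \<Rightarrow> real) \<Rightarrow> ereal" where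
  "Isym \<mu> = (SUP h\<in>UNIV. ereal (integ \<mu> h) - Psym h (marginal \<mu>))"

definition mutual_equilibrium :: "(('i::finite \<Rightarrow> 'a::{finite,linorder}) \<Rightarrow> real) \<Rightarrow> (('i \<Rightarrow> 'a) \<Rightarrow> real) \<Rightarrow> bool" where
  "mutual_equilibrium \<mu> h \<longleftrightarrow> Isym \<mu> = ereal (integ \<mu> h) - Psym h (marginal \<mu>)"

end

theory Submission
  imports Defs "HOL-Combinatorics.Multiset_Permutations" "HOL-Real_Asymp.Real_Asymp"
begin

(*
  Let gamma be a strictly positive probability on X^n with marginals M_i and
  write S = sum_i H(M_i) (H = Shannon entropy). Then for every potential g the mutual pressure
  is finite and
      gamma(g) + H(gamma) - S  <=  P_sym(g : M)  <=  P(g) - S.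
  To see this, the averaged partition function is rewritten as a sum over tuples of
  rearrangements of the approximating sequences, divided by the product of multinomial
  coefficients; these are exp(N H(M_i) + O(log N)) by Stirling-type bounds on ln m!.
  The rearrangement sum is at most Z(g)^N (upper bound), and at least the contribution of
  the rearrangements of one N-sample whose marginals are the approximating sequences and
  whose empirical distribution tends to gamma (lower bound).

  For gamma = gibbs h the bounds meet at g = h because gibbs h (h) + H(gibbs h) = P(h).
  Since a mutual equilibrium is a maximiser of g |-> mu(g) - P_sym(g), both implications
  reduce to the classical variational principle, whose unique maximiser is gibbs h.
*)


lemma mult_ln_Suc_le: "real m * ln (real m + 1) \<le> real m * ln (real m) + 1"
proof (cases "m = 0")
  case False
  then have m: "real m > 0" by simp
  have "ln (real m + 1) - ln (real m) = ln (1 + 1 / real m)"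
    using m by (simp add: ln_div field_simps)
  also have "\<dots> \<le> 1 / real m" using m by (intro ln_add_one_self_le_self) simp
  finally have "real m * (ln (real m + 1) - ln (real m)) \<le> real m * (1 / real m)"
    using m by (intro mult_left_mono) auto
  then show ?thesis using m by (simp add: algebra_simps)
qed simp

lemma ln_fact_Suc: "ln (fact (Suc m) :: real) = ln (real m + 1) + ln (fact m)"
  by (simp add: ln_mult add.commute)

lemma ln_fact_lower: "real m * ln (real m) - real m \<le> ln (fact m)"
proof (induction m)
  case (Suc m)
  then show ?case using mult_ln_Suc_le[of m] unfolding ln_fact_Suc by (simp add: algebra_simps)
qed simp

lemma ln_fact_upper_Suc: "ln (fact m) \<le> (real m + 1) * ln (real m + 1) - real m"
proof (induction m)
  case (Suc m)
  have "ln ((real m + 1) / (real m + 2)) \<le> (real m + 1) / (real m + 2) - 1"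
    by (intro ln_le_minus_one) auto
  also have "\<dots> = - 1 / (real m + 2)" by (simp add: field_simps)
  finally have "(real m + 2) * (ln (real m + 1) - ln (real m + 2)) \<le> (real m + 2) * (- 1 / (real m + 2))"
    by (intro mult_left_mono) (auto simp: ln_div)
  then have "(real m + 2) * ln (real m + 1) + 1 \<le> (real m + 2) * ln (real m + 2)"
    by (simp add: algebra_simps)
  then show ?case using Suc unfolding ln_fact_Suc by (simp add: algebra_simps)
qed simp

lemma ln_fact_upper: "ln (fact m) \<le> real m * ln (real m) - real m + ln (real m + 1) + 1"
  using ln_fact_upper_Suc[of m] mult_ln_Suc_le[of m] by (simp add: algebra_simps)

text \<open>The error terms of all estimates below are multiples of \<open>(ln (N + 1) + 1) / N\<close>.\<close>

lemma ln_error_tendsto_zero: "(\<lambda>N. (ln (real N + 1) + 1) / real N) \<longlonglongrightarrow> 0"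
  by real_asymp

lemma floor_mult_div_tendsto:
  assumes "(m::real) \<ge> 0"
  shows "(\<lambda>N. real (nat \<lfloor>real N * m\<rfloor>) / real N) \<longlonglongrightarrow> m"
proof (rule tendsto_sandwich)
  have bounds: "real N * m - 1 \<le> real (nat \<lfloor>real N * m\<rfloor>)" "real (nat \<lfloor>real N * m\<rfloor>) \<le> real N * m" for N
    using assms by (simp_all add: of_nat_nat)
  show "eventually (\<lambda>N. m - 1 / real N \<le> real (nat \<lfloor>real N * m\<rfloor>) / real N) sequentially"
    using eventually_gt_at_top[of "0::nat"]
  proof eventually_elim
    case (elim N)
    then have "(real N * m - 1) / real N \<le> real (nat \<lfloor>real N * m\<rfloor>) / real N"
      using bounds(1) by (intro divide_right_mono) auto
    then show ?case using elim by (simp add: field_simps)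
  qed
  show "eventually (\<lambda>N. real (nat \<lfloor>real N * m\<rfloor>) / real N \<le> m) sequentially"
    using eventually_gt_at_top[of "0::nat"]
    by eventually_elim (use bounds(2) in \<open>simp add: field_simps\<close>)
  have "(\<lambda>N. m - 1 / real N) \<longlonglongrightarrow> m - 0" by (intro tendsto_diff tendsto_const lim_inverse_n')
  then show "(\<lambda>N. m - 1 / real N) \<longlonglongrightarrow> m" by simp
qed simp

lemma Limsup_le_lim:
  assumes "eventually (\<lambda>N. a N \<le> u N) sequentially" "u \<longlonglongrightarrow> U"
  shows "limsup (\<lambda>N. ereal (a N)) \<le> ereal U"
proof -
  have "limsup (\<lambda>N. ereal (a N)) \<le> limsup (\<lambda>N. ereal (u N))"
    using assms(1) by (intro Limsup_mono) (auto elim: eventually_mono)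
  also have "\<dots> = ereal U"
    using assms(2) by (intro lim_imp_Limsup) (auto intro: tendsto_ereal)
  finally show ?thesis .
qed

lemma lim_le_Limsup:
  assumes "eventually (\<lambda>N. l N \<le> a N) sequentially" "l \<longlonglongrightarrow> L"
  shows "ereal L \<le> limsup (\<lambda>N. ereal (a N))"
proof -
  have "ereal L = limsup (\<lambda>N. ereal (l N))"
    using assms(2) by (intro lim_imp_Limsup[symmetric]) (auto intro: tendsto_ereal)
  also have "\<dots> \<le> limsup (\<lambda>N. ereal (a N))"
    using assms(1) by (intro Limsup_mono) (auto elim: eventually_mono)
  finally show ?thesis .
qed

definition entropy :: "('b::finite \<Rightarrow> real) \<Rightarrow> real" where
  "entropy p = - (\<Sum>x\<in>UNIV. p x * ln (p x))"

lemma entropy_tendsto: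
  fixes p :: "nat \<Rightarrow> 'b::finite \<Rightarrow> real"
  assumes "\<And>x. (\<lambda>N. p N x) \<longlonglongrightarrow> q x" "\<And>x. q x > 0"
  shows "(\<lambda>N. entropy (p N)) \<longlonglongrightarrow> entropy q"
  unfolding entropy_def using assms
  by (intro tendsto_minus tendsto_sum tendsto_mult tendsto_ln) (auto simp: less_imp_neq[symmetric])

definition empirical :: "'b multiset \<Rightarrow> 'b \<Rightarrow> real" where
  "empirical A x = real (count A x) / real (size A)"

lemma seq_type_empirical: "seq_type xs = empirical (mset xs)"
  by (simp add: fun_eq_iff seq_type_def empirical_def count_mset)

lemma sum_count_UNIV: "(\<Sum>x\<in>UNIV. count (A::'b::finite multiset) x) = size A"
proof -
  have "(\<Sum>x\<in>UNIV. count A x) = (\<Sum>x\<in>set_mset A. count A x)"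
    by (intro sum.mono_neutral_right) (auto simp: not_in_iff)
  then show ?thesis by (simp add: size_multiset_overloaded_eq)
qed

lemma sum_real_count_UNIV: "(\<Sum>x\<in>UNIV. real (count (A::'b::finite multiset) x)) = real (size A)"
  by (metis of_nat_sum sum_count_UNIV)

lemma multiset_with_counts: "\<exists>A::'b::finite multiset. \<forall>x. count A x = m x"
proof
  show "\<forall>x. count (\<Sum>y\<in>UNIV. replicate_mset (m y) y) x = m x"
    by (simp add: count_sum sum.delta)
qed

lemma count_image_mset_fibre:
  "count (image_mset f (A::'b::finite multiset)) t = (\<Sum>x\<in>{x. f x = t}. count A x)"
  unfolding count_image_mset
  by (intro sum.mono_neutral_left) (auto simp: not_in_iff)

lemma ln_card_permutations_of_multiset:
  "ln (real (card (permutations_of_multiset (A::'b::finite multiset))))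
     = ln (fact (size A)) - (\<Sum>x\<in>UNIV. ln (fact (count A x)))"
proof -
  let ?C = "real (card (permutations_of_multiset A))" and ?F = "\<Prod>x\<in>UNIV. fact (count A x) :: real"
  have "(\<Prod>x\<in>UNIV. fact (count A x) :: nat) = (\<Prod>x\<in>set_mset A. fact (count A x))"
    by (intro prod.mono_neutral_right) (auto simp: not_in_iff)
  then have "card (permutations_of_multiset A) * (\<Prod>x\<in>UNIV. fact (count A x) :: nat) = fact (size A)"
    using card_permutations_of_multiset[of A] by simp
  then have "real (card (permutations_of_multiset A) * (\<Prod>x\<in>UNIV. fact (count A x) :: nat)) = fact (size A)"
    by (simp only: of_nat_fact)
  then have "ln (?C * ?F) = ln (fact (size A))" by (simp add: of_nat_prod)
  moreover have "?C > 0" by (simp add: card_gt_0_iff)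
  moreover have "?F > 0" by (intro prod_pos) auto
  moreover have "ln ?F = (\<Sum>x\<in>UNIV. ln (fact (count A x)))" by (rule ln_prod) auto
  ultimately show ?thesis by (simp add: ln_mult)
qed

lemma size_mult_entropy_empirical:
  fixes A :: "'b::finite multiset"
  assumes "size A > 0"
  shows "real (size A) * entropy (empirical A) =
     real (size A) * ln (real (size A)) - (\<Sum>x\<in>UNIV. real (count A x) * ln (real (count A x)))"
proof -
  let ?N = "real (size A)"
  have N: "?N > 0" using assms by simp
  have summand: "?N * (empirical A x * ln (empirical A x)) =
      real (count A x) * ln (real (count A x)) - real (count A x) * ln ?N" for x
    using N by (cases "count A x = 0") (simp_all add: empirical_def ln_div right_diff_distrib)
  have "?N * entropy (empirical A) = - (\<Sum>x\<in>UNIV. ?N * (empirical A x * ln (empirical A x)))"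
    by (simp add: entropy_def sum_distrib_left)
  also have "\<dots> = (\<Sum>x\<in>UNIV. real (count A x)) * ln ?N - (\<Sum>x\<in>UNIV. real (count A x) * ln (real (count A x)))"
    unfolding summand by (simp add: sum_subtractf sum_distrib_right)
  finally show ?thesis by (simp only: sum_real_count_UNIV)
qed

lemma ln_card_permutations_of_multiset_lower:
  fixes A :: "'b::finite multiset"
  assumes "size A > 0"
  shows "real (size A) * entropy (empirical A) - real CARD('b) * (ln (real (size A) + 1) + 1)
     \<le> ln (real (card (permutations_of_multiset A)))"
proof -
  let ?N = "real (size A)"
  have "ln (fact (count A x)) \<le> real (count A x) * ln (real (count A x)) - real (count A x) + (ln (?N + 1) + 1)" for x
  proof -
    have "ln (real (count A x) + 1) \<le> ln (?N + 1)" using count_le_size[of A x] by simp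
    then show ?thesis using ln_fact_upper[of "count A x"] by linarith
  qed
  then have "(\<Sum>x\<in>UNIV. ln (fact (count A x)))
      \<le> (\<Sum>x\<in>UNIV. real (count A x) * ln (real (count A x)) - real (count A x) + (ln (?N + 1) + 1))"
    by (intro sum_mono)
  also have "\<dots> = (\<Sum>x\<in>UNIV. real (count A x) * ln (real (count A x))) - ?N + real CARD('b) * (ln (?N + 1) + 1)"
    by (simp add: sum.distrib sum_subtractf sum_real_count_UNIV)
  finally show ?thesis
    using ln_card_permutations_of_multiset[of A] size_mult_entropy_empirical[OF assms]
      ln_fact_lower[of "size A"] by linarith
qed

lemma ln_card_permutations_of_multiset_upper:
  fixes A :: "'b::finite multiset"
  assumes "size A > 0"
  shows "ln (real (card (permutations_of_multiset A)))
     \<le> real (size A) * entropy (empirical A) + ln (real (size A) + 1) + 1"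
proof -
  have "(\<Sum>x\<in>UNIV. real (count A x) * ln (real (count A x)) - real (count A x))
      \<le> (\<Sum>x\<in>UNIV. ln (fact (count A x)))"
    by (intro sum_mono ln_fact_lower)
  then have "(\<Sum>x\<in>UNIV. real (count A x) * ln (real (count A x))) - real (size A)
      \<le> (\<Sum>x\<in>UNIV. ln (fact (count A x)))"
    by (simp add: sum_subtractf sum_real_count_UNIV)
  then show ?thesis
    using ln_card_permutations_of_multiset[of A] size_mult_entropy_empirical[OF assms]
      ln_fact_upper[of "size A"] by linarith
qed

text \<open>Permuting a list of length \<open>N\<close> by all of \<open>S\<^sub>N\<close> hits every rearrangement of it equally
  often: composing with a permutation that maps one rearrangement to another is a bijection
  between the corresponding fibres.\<close>

lemma obtain_permutes_rearrangement:
  assumes "length xs = N" and "ys \<in> permutations_of_multiset (mset xs)"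
  obtains \<sigma> where "\<sigma> permutes {..<N}" and "permute_list \<sigma> xs = ys"
proof -
  have "mset ys = mset xs" using assms(2) by (rule permutations_of_multisetD)
  then obtain \<sigma> where "\<sigma> permutes {..<length xs}" and "permute_list \<sigma> xs = ys"
    by (rule mset_eq_permutation)
  then show thesis using assms(1) that by simp
qed

abbreviation permutes_fibre :: "nat \<Rightarrow> 'a list \<Rightarrow> 'a list \<Rightarrow> (nat \<Rightarrow> nat) set" where
  "permutes_fibre N xs ys \<equiv> {\<sigma>. \<sigma> permutes {..<N} \<and> permute_list \<sigma> xs = ys}"

lemma card_permutes_fibre_le:
  assumes len: "length xs = N" and ys: "mset ys = mset xs" and ys': "mset ys' = mset xs"
  shows "card (permutes_fibre N xs ys) \<le> card (permutes_fibre N xs ys')"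
proof -
  obtain \<tau> where \<tau>: "\<tau> permutes {..<length ys}" "permute_list \<tau> ys = ys'"
    using ys ys' by (metis mset_eq_permutation)
  have \<tau>N: "\<tau> permutes {..<N}" using \<tau>(1) ys len by (metis size_mset)
  show ?thesis
  proof (rule card_inj_on_le[where f = "\<lambda>\<sigma>. \<sigma> \<circ> \<tau>"])
    show "inj_on (\<lambda>\<sigma>. \<sigma> \<circ> \<tau>) (permutes_fibre N xs ys)"
    proof (rule inj_onI)
      fix a b assume "a \<circ> \<tau> = b \<circ> \<tau>"
      then have "a \<circ> \<tau> \<circ> inv \<tau> = b \<circ> \<tau> \<circ> inv \<tau>" by simp
      then show "a = b" by (simp add: comp_assoc permutes_inv_o(1)[OF \<tau>N])
    qed
    show "(\<lambda>\<sigma>. \<sigma> \<circ> \<tau>) ` permutes_fibre N xs ys \<subseteq> permutes_fibre N xs ys'"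
      using \<tau>N \<tau>(2) len permute_list_compose[of \<tau> xs] by (auto intro: permutes_compose)
    show "finite (permutes_fibre N xs ys')"
      by (rule finite_subset[of _ "{\<sigma>. \<sigma> permutes {..<N}}"]) (auto intro: finite_permutations)
  qed
qed

lemma card_permutes_fibre:
  assumes len: "length xs = N" and ys: "ys \<in> permutations_of_multiset (mset xs)"
  shows "real (card (permutes_fibre N xs ys)) * real (card (permutations_of_multiset (mset xs))) = fact N"
proof -
  define P where "P = permutations_of_multiset (mset xs)"
  define S where "S = {\<sigma>. \<sigma> permutes {..<N}}"
  have same_card: "card (permutes_fibre N xs ys') = card (permutes_fibre N xs ys)" if "ys' \<in> P" for ys'
  proof -
    have "mset ys' = mset xs" "mset ys = mset xs"
      using that ys by (simp_all add: P_def permutations_of_multisetD)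
    then show ?thesis using card_permutes_fibre_le[OF len] by (simp add: le_antisym)
  qed
  have img: "(\<lambda>\<sigma>. permute_list \<sigma> xs) ` S = P"
  proof
    show "(\<lambda>\<sigma>. permute_list \<sigma> xs) ` S \<subseteq> P"
      using len by (auto simp: S_def P_def intro!: permutations_of_multisetI)
    show "P \<subseteq> (\<lambda>\<sigma>. permute_list \<sigma> xs) ` S"
    proof
      fix ys' assume "ys' \<in> P"
      then obtain \<sigma> where "\<sigma> permutes {..<N}" "permute_list \<sigma> xs = ys'"
        unfolding P_def by (rule obtain_permutes_rearrangement[OF len])
      then show "ys' \<in> (\<lambda>\<sigma>. permute_list \<sigma> xs) ` S" by (auto simp: S_def)
    qed
  qed
  have "card S = (\<Sum>ys'\<in>(\<lambda>\<sigma>. permute_list \<sigma> xs) ` S. card {\<sigma>. \<sigma> \<in> S \<and> permute_list \<sigma> xs = ys'})"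
    using sum.image_gen[of S "\<lambda>_. 1::nat" "\<lambda>\<sigma>. permute_list \<sigma> xs"]
    by (simp add: S_def finite_permutations)
  also have "\<dots> = card (permutes_fibre N xs ys) * card P"
    unfolding img by (simp add: S_def same_card)
  finally have "card (permutes_fibre N xs ys) * card P = fact N"
    using card_permutations[of "{..<N}" N] by (simp add: S_def)
  then show ?thesis by (metis P_def of_nat_fact of_nat_mult)
qed

lemma permute_list_PiE_image:
  fixes xs :: "'i::finite \<Rightarrow> 'a list"
  assumes len: "\<And>i. length (xs i) = N"
  shows "(\<lambda>s i. permute_list (s i) (xs i)) ` PiE UNIV (\<lambda>_. {\<sigma>. \<sigma> permutes {..<N}})
       = PiE UNIV (\<lambda>i. permutations_of_multiset (mset (xs i)))"
proof
  show "(\<lambda>s i. permute_list (s i) (xs i)) ` PiE UNIV (\<lambda>_. {\<sigma>. \<sigma> permutes {..<N}})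
      \<subseteq> PiE UNIV (\<lambda>i. permutations_of_multiset (mset (xs i)))"
  proof (rule image_subsetI)
    fix s :: "'i \<Rightarrow> nat \<Rightarrow> nat" assume "s \<in> PiE UNIV (\<lambda>_. {\<sigma>. \<sigma> permutes {..<N}})"
    then have "s i permutes {..<length (xs i)}" for i using len by auto
    then show "(\<lambda>i. permute_list (s i) (xs i)) \<in> PiE UNIV (\<lambda>i. permutations_of_multiset (mset (xs i)))"
      by (auto intro!: permutations_of_multisetI)
  qed
  show "PiE UNIV (\<lambda>i. permutations_of_multiset (mset (xs i)))
      \<subseteq> (\<lambda>s i. permute_list (s i) (xs i)) ` PiE UNIV (\<lambda>_. {\<sigma>. \<sigma> permutes {..<N}})"
  proof
    fix Y assume Y: "Y \<in> PiE UNIV (\<lambda>i. permutations_of_multiset (mset (xs i)))"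
    have "\<forall>i. \<exists>\<sigma>. \<sigma> permutes {..<N} \<and> permute_list \<sigma> (xs i) = Y i"
      using Y len by (metis PiE_iff UNIV_I obtain_permutes_rearrangement)
    then obtain s where s: "\<And>i. s i permutes {..<N} \<and> permute_list (s i) (xs i) = Y i"
      by metis
    then have "s \<in> PiE UNIV (\<lambda>_. {\<sigma>. \<sigma> permutes {..<N}})" and "Y = (\<lambda>i. permute_list (s i) (xs i))"
      by auto
    then show "Y \<in> (\<lambda>s i. permute_list (s i) (xs i)) ` PiE UNIV (\<lambda>_. {\<sigma>. \<sigma> permutes {..<N}})"
      by blast
  qed
qed

lemma sum_permutes_PiE:
  fixes xs :: "'i::finite \<Rightarrow> 'a list" and G :: "('i \<Rightarrow> 'a list) \<Rightarrow> real"
  assumes len: "\<And>i. length (xs i) = N"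
  shows "(\<Sum>s\<in>PiE UNIV (\<lambda>_. {\<sigma>. \<sigma> permutes {..<N}}). G (\<lambda>i. permute_list (s i) (xs i)))
     = (fact N) ^ CARD('i) / (\<Prod>i\<in>UNIV. real (card (permutations_of_multiset (mset (xs i)))))
       * (\<Sum>Y\<in>PiE UNIV (\<lambda>i. permutations_of_multiset (mset (xs i))). G Y)"
proof -
  define S where "S = PiE (UNIV::'i set) (\<lambda>_. {\<sigma>. \<sigma> permutes {..<N}})"
  define P where "P = (\<lambda>i. permutations_of_multiset (mset (xs i)))"
  define \<Phi> where "\<Phi> = (\<lambda>s i. permute_list (s i) (xs i))"
  define w where "w = (fact N) ^ CARD('i) / (\<Prod>i\<in>UNIV. real (card (P i)))"
  have fS: "finite S" unfolding S_def by (intro finite_PiE) (auto intro: finite_permutations)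
  have img: "\<Phi> ` S = PiE UNIV P"
    unfolding \<Phi>_def S_def P_def by (rule permute_list_PiE_image[OF len])
  have card_fibre: "real (card {s. s \<in> S \<and> \<Phi> s = Y}) = w" if "Y \<in> PiE UNIV P" for Y
  proof -
    have "{s. s \<in> S \<and> \<Phi> s = Y} = PiE UNIV (\<lambda>i. permutes_fibre N (xs i) (Y i))"
      by (auto simp: S_def \<Phi>_def)
    then have "real (card {s. s \<in> S \<and> \<Phi> s = Y}) = (\<Prod>i\<in>UNIV. real (card (permutes_fibre N (xs i) (Y i))))"
      by (simp add: card_PiE)
    also have "\<dots> = (\<Prod>i\<in>UNIV. fact N / real (card (P i)))"
    proof (intro prod.cong refl)
      fix i
      have "real (card (permutes_fibre N (xs i) (Y i))) * real (card (P i)) = fact N"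
        using that unfolding P_def by (intro card_permutes_fibre len) auto
      moreover have "real (card (P i)) > 0" unfolding P_def by (simp add: card_gt_0_iff)
      ultimately show "real (card (permutes_fibre N (xs i) (Y i))) = fact N / real (card (P i))"
        by (simp add: field_simps)
    qed
    finally show ?thesis by (simp add: prod_dividef w_def)
  qed
  have "(\<Sum>s\<in>S. G (\<Phi> s)) = (\<Sum>Y\<in>\<Phi> ` S. \<Sum>s\<in>{s. s \<in> S \<and> \<Phi> s = Y}. G (\<Phi> s))"
    by (rule sum.image_gen[OF fS])
  also have "\<dots> = (\<Sum>Y\<in>PiE UNIV P. w * G Y)"
    unfolding img by (intro sum.cong refl) (simp add: card_fibre)
  finally show ?thesis by (simp add: S_def P_def \<Phi>_def w_def sum_distrib_left)
qed

definition rearrangement_sum :: "(('i::finite \<Rightarrow> 'a) \<Rightarrow> real) \<Rightarrow> nat \<Rightarrow> ('i \<Rightarrow> 'a list) \<Rightarrow> real" where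
  "rearrangement_sum g N xs =
     (\<Sum>Y\<in>PiE UNIV (\<lambda>i. permutations_of_multiset (mset (xs i))). exp (\<Sum>j<N. g (\<lambda>i. Y i ! j)))"

lemma rearrangement_sum_pos: "rearrangement_sum g N xs > 0"
  unfolding rearrangement_sum_def
  by (intro sum_pos finite_PiE) (auto simp: PiE_eq_empty_iff)

lemma sym_partition_eq_rearrangement_sum:
  fixes g :: "('i::finite \<Rightarrow> 'a) \<Rightarrow> real"
  assumes len: "\<And>i. length (\<xi> N i) = N"
  shows "sym_partition g \<xi> N =
    rearrangement_sum g N (\<xi> N) / (\<Prod>i\<in>UNIV. real (card (permutations_of_multiset (mset (\<xi> N i)))))"
proof -
  define S where "S = PiE (UNIV::'i set) (\<lambda>_. {\<sigma>. \<sigma> permutes {..<N}})"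
  have "(\<Sum>s\<in>S. exp (\<Sum>j<N. g (\<lambda>i. \<xi> N i ! (inv (s i) j))))
      = (\<Sum>s\<in>S. exp (\<Sum>j<N. g (\<lambda>i. \<xi> N i ! (s i j))))"
  proof -
    have inv_S: "(\<lambda>i. inv (s i)) \<in> S \<and> (\<lambda>i. inv (inv (s i))) = s" if "s \<in> S" for s
    proof -
      have p: "s i permutes {..<N}" for i using that by (auto simp: S_def)
      then show ?thesis using permutes_inv_inv[OF p] by (auto simp: S_def permutes_inv fun_eq_iff)
    qed
    show ?thesis
      by (rule sum.reindex_bij_witness[of S "\<lambda>s i. inv (s i)" "\<lambda>s i. inv (s i)"]) (auto dest: inv_S)
  qed
  also have "\<dots> = (\<Sum>s\<in>S. exp (\<Sum>j<N. g (\<lambda>i. permute_list (s i) (\<xi> N i) ! j)))"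
  proof (intro sum.cong refl)
    fix s assume "s \<in> S"
    then have "s i permutes {..<length (\<xi> N i)}" for i using len by (auto simp: S_def)
    then show "exp (\<Sum>j<N. g (\<lambda>i. \<xi> N i ! (s i j))) = exp (\<Sum>j<N. g (\<lambda>i. permute_list (s i) (\<xi> N i) ! j))"
      using len by (simp add: permute_list_nth)
  qed
  also have "\<dots> = (fact N) ^ CARD('i) / (\<Prod>i\<in>UNIV. real (card (permutations_of_multiset (mset (\<xi> N i)))))
       * rearrangement_sum g N (\<xi> N)"
    unfolding S_def rearrangement_sum_def by (rule sum_permutes_PiE[OF len])
  finally show ?thesis
    by (simp add: sym_partition_def S_def)
qed

lemma ln_sym_partition:
  fixes g :: "('i::finite \<Rightarrow> 'a) \<Rightarrow> real"
  assumes len: "\<And>i. length (\<xi> N i) = N"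
  shows "ln (sym_partition g \<xi> N) = ln (rearrangement_sum g N (\<xi> N))
    - (\<Sum>i\<in>UNIV. ln (real (card (permutations_of_multiset (mset (\<xi> N i))))))"
proof -
  have "(\<Prod>i\<in>UNIV. real (card (permutations_of_multiset (mset (\<xi> N i))))) > 0"
    by (intro prod_pos) (simp add: card_gt_0_iff)
  moreover have "ln (\<Prod>i\<in>UNIV. real (card (permutations_of_multiset (mset (\<xi> N i))))) =
        (\<Sum>i\<in>UNIV. ln (real (card (permutations_of_multiset (mset (\<xi> N i))))))"
    by (rule ln_prod) (simp_all add: card_gt_0_iff)
  ultimately show ?thesis
    using rearrangement_sum_pos[of g N "\<xi> N"]
    by (simp add: sym_partition_eq_rearrangement_sum[where \<xi> = \<xi> and N = N, OF len] ln_div)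
qed

text \<open>Upper bound: distinct tuples of rearrangements have distinct column sequences, so the
  rearrangement sum is at most the sum over all column sequences, \<open>Z(g)\<^sup>N\<close>.\<close>

lemma rearrangement_sum_le_power:
  fixes g :: "('i::finite \<Rightarrow> 'a::finite) \<Rightarrow> real"
  assumes len: "\<And>i. length (xs i) = N"
  shows "rearrangement_sum g N xs \<le> (\<Sum>x\<in>UNIV. exp (g x)) ^ N"
proof -
  define T where "T = PiE (UNIV::'i set) (\<lambda>i. permutations_of_multiset (mset (xs i)))"
  define columns where "columns = (\<lambda>Y::'i \<Rightarrow> 'a list. \<lambda>j\<in>{..<N}. \<lambda>i. Y i ! j)"
  have lenY: "length (Y i) = N" if "Y \<in> T" for Y i
  proof -
    have "mset (Y i) = mset (xs i)" using that by (auto simp: T_def dest: permutations_of_multisetD)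
    then show ?thesis using len by (metis size_mset)
  qed
  have inj: "inj_on columns T"
  proof (rule inj_onI)
    fix Y Y' assume Y: "Y \<in> T" and Y': "Y' \<in> T" and eq: "columns Y = columns Y'"
    show "Y = Y'"
    proof
      fix i
      show "Y i = Y' i"
      proof (rule nth_equalityI)
        show "length (Y i) = length (Y' i)" using lenY[OF Y] lenY[OF Y'] by simp
        fix j assume "j < length (Y i)"
        then have "columns Y j i = Y i ! j" "columns Y' j i = Y' i ! j"
          using lenY[OF Y] by (simp_all add: columns_def)
        then show "Y i ! j = Y' i ! j" using eq by simp
      qed
    qed
  qed
  have "rearrangement_sum g N xs = (\<Sum>c\<in>columns ` T. exp (\<Sum>j<N. g (c j)))"
    unfolding rearrangement_sum_def T_def[symmetric]
    by (subst sum.reindex[OF inj]) (auto simp: columns_def intro!: sum.cong)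
  also have "\<dots> \<le> (\<Sum>c\<in>PiE {..<N} (\<lambda>_. UNIV). exp (\<Sum>j<N. g (c j)))"
    by (intro sum_mono2) (auto simp: columns_def intro: finite_PiE)
  also have "\<dots> = (\<Sum>c\<in>PiE {..<N} (\<lambda>_. UNIV). \<Prod>j<N. exp (g (c j)))"
    by (simp add: exp_sum)
  also have "\<dots> = (\<Prod>j<N. \<Sum>x\<in>UNIV. exp (g x))"
    by (rule prod_sum_PiE[symmetric]) auto
  also have "\<dots> = (\<Sum>x\<in>UNIV. exp (g x)) ^ N" by simp
  finally show ?thesis .
qed

lemma sum_mset_count:
  fixes g :: "'b::finite \<Rightarrow> real"
  shows "(\<Sum>x\<in>#K. g x) = (\<Sum>x\<in>UNIV. real (count K x) * g x)"
proof (induction K)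
  case (add a K)
  have "(\<Sum>x\<in>UNIV. real (count (add_mset a K) x) * g x) =
        (\<Sum>x\<in>UNIV. real (count K x) * g x + (if x = a then g x else 0))"
    by (intro sum.cong refl) (auto simp: algebra_simps)
  then show ?case using add by (simp add: sum.distrib)
qed simp

text \<open>Lower bound: if the multiset \<open>K\<close> of points of \<open>X\<^sup>n\<close> has the rows \<open>xs i\<close> as marginals,
  then every ordering of \<open>K\<close> yields a tuple of rearrangements (read off coordinatewise), and
  all of them contribute \<open>exp (\<Sum>\<^sub>x count K x * g x)\<close>.\<close>

lemma rearrangement_sum_ge_coupling:
  fixes g :: "('i::finite \<Rightarrow> 'a::finite) \<Rightarrow> real"
  assumes size_K: "size K = N" and marg: "\<And>i. image_mset (\<lambda>x. x i) K = mset (xs i)"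
  shows "real (card (permutations_of_multiset K)) * exp (\<Sum>x\<in>UNIV. real (count K x) * g x)
     \<le> rearrangement_sum g N xs"
proof -
  define T where "T = PiE (UNIV::'i set) (\<lambda>i. permutations_of_multiset (mset (xs i)))"
  define Q where "Q = permutations_of_multiset K"
  define rows where "rows = (\<lambda>L::('i \<Rightarrow> 'a) list. \<lambda>i. map (\<lambda>x. x i) L)"
  have lenL: "length L = N" if "L \<in> Q" for L
    using that size_K by (metis Q_def permutations_of_multisetD size_mset)
  have inj: "inj_on rows Q"
  proof (rule inj_onI)
    fix L L' assume L: "L \<in> Q" and L': "L' \<in> Q" and eq: "rows L = rows L'"
    show "L = L'"
    proof (rule nth_equalityI)
      show "length L = length L'" using lenL[OF L] lenL[OF L'] by simp
      fix j assume j: "j < length L"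
      show "L ! j = L' ! j"
      proof
        fix i
        have "rows L i ! j = rows L' i ! j" using eq by simp
        then show "(L ! j) i = (L' ! j) i" using j lenL[OF L] lenL[OF L'] by (simp add: rows_def)
      qed
    qed
  qed
  have sub: "rows ` Q \<subseteq> T"
    using marg by (auto simp: T_def Q_def rows_def dest!: permutations_of_multisetD
        intro!: permutations_of_multisetI)
  have column_value: "(\<Sum>j<N. g (\<lambda>i. rows L i ! j)) = (\<Sum>x\<in>UNIV. real (count K x) * g x)" if "L \<in> Q" for L
  proof -
    have "(\<Sum>j<N. g (\<lambda>i. rows L i ! j)) = sum_list (map g L)"
      using lenL[OF that] by (simp add: rows_def sum_list_sum_nth atLeast0LessThan)
    also have "\<dots> = (\<Sum>x\<in>#K. g x)"
      using that by (metis Q_def permutations_of_multisetD mset_map sum_mset_sum_list)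
    finally show ?thesis by (simp add: sum_mset_count)
  qed
  have "real (card Q) * exp (\<Sum>x\<in>UNIV. real (count K x) * g x) = (\<Sum>L\<in>Q. exp (\<Sum>j<N. g (\<lambda>i. rows L i ! j)))"
    by (simp add: column_value)
  also have "\<dots> = (\<Sum>Y\<in>rows ` Q. exp (\<Sum>j<N. g (\<lambda>i. Y i ! j)))"
    by (rule sum.reindex[OF inj, symmetric, unfolded comp_def])
  also have "\<dots> \<le> (\<Sum>Y\<in>T. exp (\<Sum>j<N. g (\<lambda>i. Y i ! j)))"
    by (intro sum_mono2 sub) (auto simp: T_def intro: finite_PiE)
  finally show ?thesis unfolding rearrangement_sum_def T_def Q_def .
qed

lemma ln_sym_partition_upper:
  fixes g :: "('i::finite \<Rightarrow> 'a::finite) \<Rightarrow> real"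
  assumes len: "\<And>i. length (\<xi> N i) = N" and N: "N > 0"
  shows "ln (sym_partition g \<xi> N) \<le> real N * (pressure g - (\<Sum>i\<in>UNIV. entropy (seq_type (\<xi> N i))))
      + real CARD('i) * real CARD('a) * (ln (real N + 1) + 1)"
proof -
  have Z: "(\<Sum>x\<in>UNIV. exp (g x)) > 0" by (intro sum_pos) auto
  have "ln (rearrangement_sum g N (\<xi> N)) \<le> ln ((\<Sum>x\<in>UNIV. exp (g x)) ^ N)"
    by (intro ln_mono rearrangement_sum_pos rearrangement_sum_le_power len)
  also have "\<dots> = real N * pressure g" using Z by (simp add: ln_realpow pressure_def)
  finally have "ln (rearrangement_sum g N (\<xi> N)) \<le> real N * pressure g" .
  moreover have "(\<Sum>i\<in>UNIV. real N * entropy (seq_type (\<xi> N i)) - real CARD('a) * (ln (real N + 1) + 1))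
      \<le> (\<Sum>i\<in>UNIV. ln (real (card (permutations_of_multiset (mset (\<xi> N i))))))"
  proof (intro sum_mono)
    fix i
    show "real N * entropy (seq_type (\<xi> N i)) - real CARD('a) * (ln (real N + 1) + 1)
        \<le> ln (real (card (permutations_of_multiset (mset (\<xi> N i)))))"
      using ln_card_permutations_of_multiset_lower[of "mset (\<xi> N i)"] len[of i] N
      by (simp add: seq_type_empirical)
  qed
  moreover have "(\<Sum>i\<in>UNIV. real N * entropy (seq_type (\<xi> N i)) - real CARD('a) * (ln (real N + 1) + 1))
      = real N * (\<Sum>i\<in>UNIV. entropy (seq_type (\<xi> N i))) - real CARD('i) * real CARD('a) * (ln (real N + 1) + 1)"
    by (simp add: sum_subtractf sum_distrib_left)
  ultimately show ?thesis
    using ln_sym_partition[where \<xi> = \<xi> and N = N and g = g, OF len]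
    by (simp add: right_diff_distrib)
qed

lemma ln_sym_partition_lower:
  fixes g :: "('i::finite \<Rightarrow> 'a::finite) \<Rightarrow> real"
  assumes len: "\<And>i. length (\<xi> N i) = N" and N: "N > 0"
    and size_K: "size K = N" and marg: "\<And>i. image_mset (\<lambda>x. x i) K = mset (\<xi> N i)"
  shows "real N * (entropy (empirical K) + (\<Sum>x\<in>UNIV. empirical K x * g x)
        - (\<Sum>i\<in>UNIV. entropy (seq_type (\<xi> N i))))
      - (real CARD('i \<Rightarrow> 'a) + real CARD('i)) * (ln (real N + 1) + 1)
    \<le> ln (sym_partition g \<xi> N)"
proof -
  define cK where "cK = real (card (permutations_of_multiset K))"
  have cK: "cK > 0" by (simp add: cK_def card_gt_0_iff)
  have "cK * exp (\<Sum>x\<in>UNIV. real (count K x) * g x) \<le> rearrangement_sum g N (\<xi> N)"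
    unfolding cK_def by (rule rearrangement_sum_ge_coupling[OF size_K marg])
  then have "ln (cK * exp (\<Sum>x\<in>UNIV. real (count K x) * g x)) \<le> ln (rearrangement_sum g N (\<xi> N))"
    using cK by (intro ln_mono) auto
  moreover have "(\<Sum>x\<in>UNIV. real (count K x) * g x) = real N * (\<Sum>x\<in>UNIV. empirical K x * g x)"
    using N size_K by (simp add: empirical_def sum_distrib_left)
  moreover have "real N * entropy (empirical K) - real CARD('i \<Rightarrow> 'a) * (ln (real N + 1) + 1) \<le> ln cK"
    using ln_card_permutations_of_multiset_lower[of K] N size_K by (simp add: cK_def)
  moreover have "(\<Sum>i\<in>UNIV. ln (real (card (permutations_of_multiset (mset (\<xi> N i))))))
      \<le> (\<Sum>i\<in>UNIV. real N * entropy (seq_type (\<xi> N i)) + (ln (real N + 1) + 1))"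
  proof (intro sum_mono)
    fix i
    show "ln (real (card (permutations_of_multiset (mset (\<xi> N i)))))
        \<le> real N * entropy (seq_type (\<xi> N i)) + (ln (real N + 1) + 1)"
      using ln_card_permutations_of_multiset_upper[of "mset (\<xi> N i)"] len[of i] N
      by (simp add: seq_type_empirical)
  qed
  moreover have "(\<Sum>i\<in>UNIV. real N * entropy (seq_type (\<xi> N i)) + (ln (real N + 1) + 1))
      = real N * (\<Sum>i\<in>UNIV. entropy (seq_type (\<xi> N i))) + real CARD('i) * (ln (real N + 1) + 1)"
    by (simp add: sum.distrib sum_distrib_left)
  ultimately show ?thesis
    using cK ln_sym_partition[where \<xi> = \<xi> and N = N and g = g, OF len]
    by (simp add: ln_mult right_diff_distrib distrib_left distrib_right)
qed

text \<open>Multisets \<open>R i\<close> of equal size \<open>D\<close> are the marginals of a multiset of \<open>D\<close> points of \<open>X\<^sup>n\<close>: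
  list each \<open>R i\<close> and glue the lists columnwise.\<close>

lemma joint_multiset:
  fixes R :: "'i \<Rightarrow> 'a multiset"
  assumes size_R: "\<And>i. size (R i) = D"
  shows "\<exists>F. size F = D \<and> (\<forall>i. image_mset (\<lambda>x. x i) F = R i)"
proof -
  define r where "r i = (SOME l. mset l = R i)" for i
  have r: "mset (r i) = R i" for i unfolding r_def by (rule someI_ex[OF ex_mset])
  have len: "length (r i) = D" for i using r[of i] size_R[of i] by (metis size_mset)
  define F where "F = mset (map (\<lambda>j. \<lambda>i. r i ! j) [0..<D])"
  have "image_mset (\<lambda>x. x i) F = R i" for i
  proof -
    have "image_mset (\<lambda>x. x i) F = mset (map (\<lambda>j. r i ! j) [0..<D])"
      by (simp add: F_def multiset.map_comp comp_def)
    also have "map (\<lambda>j. r i ! j) [0..<D] = r i" using len[of i] map_nth[of "r i"] by simp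
    finally show ?thesis using r by simp
  qed
  then show ?thesis by (intro exI[of _ F]) (simp add: F_def)
qed

lemma sum_fibre_minus_le:
  fixes \<gamma> :: "('i::finite \<Rightarrow> 'a::finite) \<Rightarrow> real"
  assumes "0 \<le> \<delta>"
  shows "(\<Sum>x\<in>{x. x i = t}. \<gamma> x - \<delta>) \<le> marginal \<gamma> i t - \<delta>"
proof -
  have "(\<lambda>_. t) \<in> {x::'i \<Rightarrow> 'a. x i = t}" by simp
  then have "card {x::'i \<Rightarrow> 'a. x i = t} \<noteq> 0" by (auto simp: card_eq_0_iff)
  then have "real (card {x::'i \<Rightarrow> 'a. x i = t}) \<ge> 1" by linarith
  then have "\<delta> * 1 \<le> \<delta> * real (card {x::'i \<Rightarrow> 'a. x i = t})"
    using assms by (rule mult_left_mono)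
  then show ?thesis by (simp add: sum_subtractf marginal_def mult.commute)
qed

lemma image_mset_sub_row:
  fixes \<gamma> :: "('i::finite \<Rightarrow> 'a::finite) \<Rightarrow> real" and A :: "('i \<Rightarrow> 'a) multiset"
  assumes below: "\<And>x. real (count A x) \<le> real N * (\<gamma> x - \<delta>)" and nonneg: "0 \<le> \<delta>"
    and counts: "\<And>t. real N * (marginal \<gamma> i t - \<delta>) \<le> real (count (mset xs) t)"
  shows "image_mset (\<lambda>x. x i) A \<subseteq># mset xs"
proof (rule mset_subset_eqI)
  fix t
  have "real (count (image_mset (\<lambda>x. x i) A) t) = (\<Sum>x\<in>{x. x i = t}. real (count A x))"
    by (simp add: count_image_mset_fibre)
  also have "\<dots> \<le> (\<Sum>x\<in>{x. x i = t}. real N * (\<gamma> x - \<delta>))" by (intro sum_mono below)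
  also have "\<dots> \<le> real N * (marginal \<gamma> i t - \<delta>)"
    using sum_fibre_minus_le[OF nonneg, of \<gamma> i t] by (simp add: sum_distrib_left[symmetric] mult_left_mono)
  also have "\<dots> \<le> real (count (mset xs) t)" by (rule counts)
  finally show "count (image_mset (\<lambda>x. x i) A) t \<le> count (mset xs) t" by simp
qed

text \<open>It consists of \<open>\<lfloor>N (\<gamma>(x) - \<delta>)\<rfloor>\<close> copies of each \<open>x\<close>, completed by a joint multiset of
  the remainders of the rows.\<close>

lemma coupling_with_marginals:
  fixes \<gamma> :: "('i::finite \<Rightarrow> 'a::finite) \<Rightarrow> real" and xs :: "'i \<Rightarrow> 'a list"
  assumes len: "\<And>i. length (xs i) = N"
    and sum_one: "(\<Sum>x\<in>UNIV. \<gamma> x) = 1"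
    and above: "\<And>x. \<delta> \<le> \<gamma> x" and nonneg: "0 \<le> \<delta>"
    and counts: "\<And>i t. real N * (marginal \<gamma> i t - \<delta>) \<le> real (count (mset (xs i)) t)"
  shows "\<exists>K. size K = N \<and> (\<forall>i. image_mset (\<lambda>x. x i) K = mset (xs i)) \<and>
     (\<forall>x. real N * (\<gamma> x - \<delta>) - 1 \<le> real (count K x) \<and>
          real (count K x) \<le> real N * \<gamma> x + real N * \<delta> * real CARD('i \<Rightarrow> 'a) + real CARD('i \<Rightarrow> 'a))"
proof -
  let ?C = "real CARD('i \<Rightarrow> 'a)"
  define m where "m = (\<lambda>x. nat \<lfloor>real N * (\<gamma> x - \<delta>)\<rfloor>)"
  have m_le: "real (m x) \<le> real N * (\<gamma> x - \<delta>)" and m_ge: "real N * (\<gamma> x - \<delta>) - 1 \<le> real (m x)" for x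
    using above[of x] unfolding m_def by (simp_all add: of_nat_nat)
  obtain A where count_A: "\<And>x. count A x = m x" using multiset_with_counts by metis
  define B where "B = (\<lambda>i. image_mset (\<lambda>x. x i) A)"
  have B_sub: "B i \<subseteq># mset (xs i)" for i
    unfolding B_def by (rule image_mset_sub_row[OF _ nonneg counts]) (simp add: count_A m_le)
  have size_A: "size A \<le> N"
    using size_mset_mono[OF B_sub[of undefined]] len by (simp add: B_def)
  obtain F where size_F: "size F = N - size A"
    and marg_F: "\<And>i. image_mset (\<lambda>x. x i) F = mset (xs i) - B i"
    using joint_multiset[of "\<lambda>i. mset (xs i) - B i" "N - size A"] B_sub len
    by (auto simp: size_Diff_submset B_def)
  define K where "K = A + F"
  have "size K = N" using size_A size_F by (simp add: K_def)
  moreover have "image_mset (\<lambda>x. x i) K = mset (xs i)" for i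
  proof -
    have "image_mset (\<lambda>x. x i) K = B i + (mset (xs i) - B i)" by (simp add: K_def marg_F B_def)
    then show ?thesis using B_sub[of i] by (simp add: subset_mset.add_diff_inverse)
  qed
  moreover have "real N * (\<gamma> x - \<delta>) - 1 \<le> real (count K x) \<and>
          real (count K x) \<le> real N * \<gamma> x + real N * \<delta> * ?C + ?C" for x
  proof
    show "real N * (\<gamma> x - \<delta>) - 1 \<le> real (count K x)" using m_ge[of x] by (simp add: K_def count_A)
    have "real (size F) = real N - (\<Sum>y\<in>UNIV. real (m y))"
      using size_A size_F sum_count_UNIV[of A] by (simp add: of_nat_diff count_A flip: of_nat_sum)
    also have "\<dots> \<le> real N - (\<Sum>y\<in>UNIV. real N * (\<gamma> y - \<delta>) - 1)"
      by (intro diff_left_mono sum_mono m_ge)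
    also have "\<dots> = real N * \<delta> * ?C + ?C"
      using sum_one by (simp add: sum_subtractf sum_distrib_left[symmetric] algebra_simps)
    finally have "real (count F x) \<le> real N * \<delta> * ?C + ?C"
      using count_le_size[of F x] by linarith
    moreover have "real (m x) \<le> real N * \<gamma> x"
      using m_le[of x] mult_nonneg_nonneg[OF of_nat_0_le_iff nonneg, of N]
      by (simp add: right_diff_distrib)
    ultimately show "real (count K x) \<le> real N * \<gamma> x + real N * \<delta> * ?C + ?C"
      by (simp add: K_def count_A)
  qed
  ultimately show ?thesis by blast
qed

text \<open>Rounding a probability vector: counts summing to \<open>N\<close> whose frequencies converge to it.
  All entries but one are rounded down; one fixed entry takes the remainder.\<close>

lemma rounded_counts:
  fixes p :: "'a::finite \<Rightarrow> real"
  assumes nonneg: "\<And>t. p t \<ge> 0" and sum_one: "(\<Sum>t\<in>UNIV. p t) = 1"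
  shows "\<exists>c :: nat \<Rightarrow> 'a \<Rightarrow> nat. (\<forall>N. (\<Sum>t\<in>UNIV. c N t) = N) \<and>
           (\<forall>t. (\<lambda>N. real (c N t) / real N) \<longlonglongrightarrow> p t)"
proof -
  define t0 :: 'a where "t0 = undefined"
  define f where "f N s = nat \<lfloor>real N * p s\<rfloor>" for N s
  have f_le: "real (f N s) \<le> real N * p s" for N s using nonneg[of s] by (simp add: f_def of_nat_nat)
  have split_t0: "(\<Sum>t\<in>UNIV. q t) = q t0 + (\<Sum>t\<in>-{t0}. q t)" for q :: "'a \<Rightarrow> 'b::comm_monoid_add"
    by (subst sum.remove[of UNIV t0]) (auto simp: Compl_eq_Diff_UNIV)
  have sum_f_le: "(\<Sum>s\<in>-{t0}. f N s) \<le> N" for N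
  proof -
    have "real (\<Sum>s\<in>-{t0}. f N s) \<le> (\<Sum>s\<in>-{t0}. real N * p s)" by (simp add: sum_mono f_le)
    also have "\<dots> \<le> (\<Sum>s\<in>UNIV. real N * p s)" using nonneg by (intro sum_mono2) auto
    also have "\<dots> = real N" using sum_one by (simp add: sum_distrib_left[symmetric])
    finally show ?thesis by linarith
  qed
  define c where "c N t = (if t = t0 then N - (\<Sum>s\<in>-{t0}. f N s) else f N t)" for N t
  have "(\<Sum>t\<in>UNIV. c N t) = N" for N
    using sum_f_le[of N] split_t0[of "c N"] by (simp add: c_def)
  moreover have "(\<lambda>N. real (c N t) / real N) \<longlonglongrightarrow> p t" for t
  proof (cases "t = t0")
    case False
    then show ?thesis using floor_mult_div_tendsto[OF nonneg] by (simp add: c_def f_def)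
  next
    case True
    have "(\<lambda>N. 1 - (\<Sum>s\<in>-{t0}. real (f N s) / real N)) \<longlonglongrightarrow> 1 - (\<Sum>s\<in>-{t0}. p s)"
      unfolding f_def by (intro tendsto_diff tendsto_const tendsto_sum floor_mult_div_tendsto nonneg)
    moreover have "1 - (\<Sum>s\<in>-{t0}. p s) = p t" using sum_one split_t0[of p] True by simp
    ultimately have lim: "(\<lambda>N. 1 - (\<Sum>s\<in>-{t0}. real (f N s) / real N)) \<longlonglongrightarrow> p t" by simp
    have "eventually (\<lambda>N. 1 - (\<Sum>s\<in>-{t0}. real (f N s) / real N) = real (c N t) / real N) sequentially"
      using eventually_gt_at_top[of "0::nat"]
    proof eventually_elim
      case (elim N)
      have "real (c N t) = real N - (\<Sum>s\<in>-{t0}. real (f N s))"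
        using True sum_f_le[of N] by (simp add: c_def of_nat_diff)
      then have "real (c N t) / real N = 1 - (\<Sum>s\<in>-{t0}. real (f N s)) / real N"
        using elim by (simp add: diff_divide_distrib)
      then show ?case by (simp add: sum_divide_distrib)
    qed
    then show ?thesis by (rule Lim_transform_eventually[OF lim])
  qed
  ultimately show ?thesis by blast
qed

text \<open>Approximating sequences exist for every tuple of probability vectors: sort the
  multisets with the rounded counts.\<close>

lemma approx_seq_exists:
  fixes M :: "'i \<Rightarrow> 'a::{finite,linorder} \<Rightarrow> real"
  assumes nonneg: "\<And>i t. M i t \<ge> 0" and sum_one: "\<And>i. (\<Sum>t\<in>UNIV. M i t) = 1"
  shows "\<exists>\<xi>. approx_seq \<xi> M"
proof -
  have "\<forall>i. \<exists>c. (\<forall>N. (\<Sum>t\<in>UNIV. c N t) = N) \<and> (\<forall>t. (\<lambda>N. real (c N t) / real N) \<longlonglongrightarrow> M i t)"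
    using rounded_counts[OF nonneg sum_one] by blast
  from choice[OF this] obtain c where c: "\<forall>i. (\<forall>N. (\<Sum>t\<in>UNIV. c i N t) = N) \<and>
      (\<forall>t. (\<lambda>N. real (c i N t) / real N) \<longlonglongrightarrow> M i t)"
    by blast
  define A where "A N i = (SOME A. \<forall>t. count A t = c i N t)" for N i
  have count_A: "count (A N i) t = c i N t" for N i t
    unfolding A_def using someI_ex[OF multiset_with_counts] by blast
  define \<xi> where "\<xi> N i = sorted_list_of_multiset (A N i)" for N i
  have size_A: "size (A N i) = N" for N i
    using sum_count_UNIV[of "A N i"] c by (simp add: count_A)
  have "length (\<xi> N i) = N \<and> sorted (\<xi> N i)" for N i
    using mset_sorted_list_of_multiset[of "A N i"] size_mset[of "\<xi> N i"]
    by (simp add: \<xi>_def size_A)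
  moreover have "seq_type (\<xi> N i) t = real (c i N t) / real N" for N i t
    by (simp add: seq_type_empirical empirical_def \<xi>_def count_A size_A)
  ultimately have "approx_seq \<xi> M" using c by (simp add: approx_seq_def)
  then show ?thesis by blast
qed

lemma sum_over_fibres:
  fixes f :: "('i::finite \<Rightarrow> 'a::finite) \<Rightarrow> real"
  shows "(\<Sum>t\<in>UNIV. \<Sum>x\<in>{x. x i = t}. f x) = (\<Sum>x\<in>UNIV. f x)"
  using sum.group[of "UNIV::('i\<Rightarrow>'a) set" "UNIV::'a set" "\<lambda>x. x i" f] by simp

lemma marginal_prob:
  fixes \<gamma> :: "('i::finite \<Rightarrow> 'a::finite) \<Rightarrow> real"
  assumes "is_prob \<gamma>"
  shows "marginal \<gamma> i t \<ge> 0" and "(\<Sum>t\<in>UNIV. marginal \<gamma> i t) = 1"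
  using assms unfolding is_prob_def marginal_def by (auto intro: sum_nonneg simp: sum_over_fibres)

lemma marginal_pos:
  assumes "\<And>x. \<gamma> x > 0"
  shows "marginal \<gamma> i t > 0"
proof -
  have "\<gamma> (\<lambda>_. t) \<le> marginal \<gamma> i t"
    unfolding marginal_def by (rule member_le_sum) (auto intro: less_imp_le assms)
  then show ?thesis using assms[of "\<lambda>_. t"] by linarith
qed

lemma partition_function_pos: "(\<Sum>x\<in>UNIV. exp ((h :: 'b::finite \<Rightarrow> real) x)) > 0"
  by (intro sum_pos) auto

lemma gibbs_eq: "gibbs h x = exp (h x) / (\<Sum>y\<in>UNIV. exp (h y))"
  using partition_function_pos[of h] by (simp add: gibbs_def pressure_def exp_diff)

lemma gibbs_pos: "gibbs h x > 0"
  by (simp add: gibbs_def)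

lemma gibbs_prob: "is_prob (gibbs (h :: 'b::finite \<Rightarrow> real))"
  using partition_function_pos[of h]
  by (simp add: is_prob_def gibbs_pos less_imp_le gibbs_eq sum_divide_distrib[symmetric])

lemma gibbs_marginal:
  fixes h :: "('i::finite \<Rightarrow> 'a::finite) \<Rightarrow> real"
  shows "marginal (gibbs h) i = gibbs (hmarg h i)"
proof
  fix t
  have fibre_sum: "exp (hmarg h i s) = (\<Sum>x\<in>{x. x i = s}. exp (h x))" for s
  proof -
    have "(\<lambda>_. s) \<in> {x::'i \<Rightarrow> 'a. x i = s}" by simp
    then have "(\<Sum>x\<in>{x. x i = s}. exp (h x)) > 0" by (intro sum_pos) auto
    then show ?thesis by (simp add: hmarg_def)
  qed
  have "marginal (gibbs h) i t = (\<Sum>x\<in>{x. x i = t}. exp (h x)) / (\<Sum>y\<in>UNIV. exp (h y))"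
    by (simp add: marginal_def gibbs_eq sum_divide_distrib)
  also have "\<dots> = exp (hmarg h i t) / (\<Sum>s\<in>UNIV. exp (hmarg h i s))"
    by (simp only: fibre_sum sum_over_fibres)
  also have "\<dots> = gibbs (hmarg h i) t" by (simp add: gibbs_eq)
  finally show "marginal (gibbs h) i t = gibbs (hmarg h i) t" .
qed

lemma gibbs_free_energy: "integ (gibbs h) h + entropy (gibbs h) = pressure (h :: 'b::finite \<Rightarrow> real)"
proof -
  have sum_one: "(\<Sum>x\<in>UNIV. gibbs h x) = 1" using gibbs_prob[of h] by (simp add: is_prob_def)
  have "entropy (gibbs h) = - (\<Sum>x\<in>UNIV. gibbs h x * (h x - pressure h))"
    by (simp add: entropy_def gibbs_def)
  also have "\<dots> = pressure h * (\<Sum>x\<in>UNIV. gibbs h x) - (\<Sum>x\<in>UNIV. h x * gibbs h x)"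
    by (simp add: algebra_simps sum_subtractf sum_distrib_left)
  finally show ?thesis using sum_one by (simp add: integ_def)
qed

text \<open>If the probability \<open>\<mu>\<close> maximises \<open>g \<mapsto> \<mu>(g) - P(g)\<close> at \<open>h\<close>,
  then \<open>\<mu> = gibbs h\<close>: raising \<open>h\<close> by \<open>\<epsilon>\<close> at a single point \<open>y\<close> raises \<open>\<mu>(h)\<close> by \<open>\<epsilon> \<mu>(y)\<close>
  and the pressure by at most \<open>(\<epsilon> + \<epsilon>\<^sup>2) gibbs h y\<close>, so \<open>\<mu> \<le> gibbs h\<close>; both have mass one.\<close>

lemma maximiser_le_gibbs_perturbed:
  fixes \<mu> h :: "'b::finite \<Rightarrow> real"
  assumes opt: "\<And>g. integ \<mu> g - pressure g \<le> integ \<mu> h - pressure h"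
    and \<epsilon>: "0 < \<epsilon>" "\<epsilon> \<le> 1"
  shows "\<mu> y \<le> (1 + \<epsilon>) * gibbs h y"
proof -
  define Z where "Z = (\<Sum>x\<in>UNIV. exp (h x))"
  have Z: "Z > 0" unfolding Z_def by (rule partition_function_pos)
  define g where "g x = h x + (if x = y then \<epsilon> else 0)" for x
  have "integ \<mu> g = (\<Sum>x\<in>UNIV. h x * \<mu> x + (if x = y then \<epsilon> * \<mu> x else 0))"
    unfolding integ_def by (intro sum.cong refl) (simp add: g_def algebra_simps)
  then have integ_g: "integ \<mu> g = integ \<mu> h + \<epsilon> * \<mu> y" by (simp add: sum.distrib integ_def)
  define w where "w = exp (h y) * (exp \<epsilon> - 1)"
  have w: "w \<ge> 0" using \<epsilon> by (simp add: w_def)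
  have "(\<Sum>x\<in>UNIV. exp (g x)) = (\<Sum>x\<in>UNIV. exp (h x) + (if x = y then w else 0))"
    by (intro sum.cong refl) (auto simp: g_def w_def exp_add algebra_simps)
  then have Z_g: "(\<Sum>x\<in>UNIV. exp (g x)) = Z + w" by (simp add: sum.distrib Z_def)
  have "pressure g - pressure h = ln (Z + w) - ln Z" by (simp add: pressure_def Z_g Z_def)
  also have "\<dots> = ln ((Z + w) / Z)" using Z w by (simp add: ln_div)
  also have "\<dots> = ln (1 + w / Z)" using Z by (simp add: field_simps)
  also have "\<dots> \<le> w / Z" using Z w by (intro ln_add_one_self_le_self) simp
  also have "w / Z = gibbs h y * (exp \<epsilon> - 1)" by (simp add: w_def gibbs_eq Z_def)
  also have "\<dots> \<le> gibbs h y * (\<epsilon> + \<epsilon>\<^sup>2)"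
    using exp_bound[of \<epsilon>] \<epsilon> gibbs_pos[of h y] by (intro mult_left_mono) auto
  finally have "\<epsilon> * \<mu> y \<le> \<epsilon> * ((1 + \<epsilon>) * gibbs h y)"
    using opt[of g] integ_g by (simp add: power2_eq_square algebra_simps)
  then show ?thesis using \<epsilon> by simp
qed

lemma gibbs_unique:
  fixes \<mu> h :: "'b::finite \<Rightarrow> real"
  assumes prob: "is_prob \<mu>" and opt: "\<And>g. integ \<mu> g - pressure g \<le> integ \<mu> h - pressure h"
  shows "\<mu> = gibbs h"
proof -
  have gibbs_le_1: "gibbs h y \<le> 1" for y
    using gibbs_prob[of h] member_le_sum[of y UNIV "gibbs h"]
    by (simp add: is_prob_def less_imp_le gibbs_pos)
  have le: "\<mu> y \<le> gibbs h y" for y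
  proof (rule field_le_epsilon)
    fix e :: real assume e: "e > 0"
    define \<epsilon> where "\<epsilon> = min 1 e"
    have \<epsilon>: "0 < \<epsilon>" "\<epsilon> \<le> 1" "\<epsilon> \<le> e" using e by (auto simp: \<epsilon>_def)
    have "\<mu> y \<le> gibbs h y + \<epsilon> * gibbs h y"
      using maximiser_le_gibbs_perturbed[OF opt \<epsilon>(1,2)] by (simp add: distrib_right)
    also have "\<epsilon> * gibbs h y \<le> \<epsilon> * 1" using gibbs_le_1[of y] \<epsilon> by (intro mult_left_mono) auto
    finally show "\<mu> y \<le> gibbs h y + e" using \<epsilon>(3) by simp
  qed
  have "(\<Sum>x\<in>UNIV. gibbs h x - \<mu> x) = 0"
    using prob gibbs_prob[of h] by (simp add: sum_subtractf is_prob_def)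
  then have "\<forall>x\<in>UNIV. gibbs h x - \<mu> x = 0" using le by (subst (asm) sum_nonneg_eq_0_iff) auto
  then show ?thesis by (auto simp: fun_eq_iff)
qed

lemma limsup_sym_partition_upper:
  fixes g :: "('i::finite \<Rightarrow> 'a::{finite,linorder}) \<Rightarrow> real"
  assumes ap: "approx_seq \<xi> M" and M_pos: "\<And>i t. M i t > 0"
  shows "limsup (\<lambda>N. ereal (ln (sym_partition g \<xi> N) / real N))
      \<le> ereal (pressure g - (\<Sum>i\<in>UNIV. entropy (M i)))"
proof -
  have len: "\<And>N i. length (\<xi> N i) = N" and conv: "\<And>i t. (\<lambda>N. seq_type (\<xi> N i) t) \<longlonglongrightarrow> M i t"
    using ap by (auto simp: approx_seq_def)
  define err where "err N = (ln (real N + 1) + 1) / real N" for N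
  define u where "u N = pressure g - (\<Sum>i\<in>UNIV. entropy (seq_type (\<xi> N i)))
      + real CARD('i) * real CARD('a) * err N" for N
  have "u \<longlonglongrightarrow> pressure g - (\<Sum>i\<in>UNIV. entropy (M i)) + real CARD('i) * real CARD('a) * 0"
    unfolding u_def[abs_def] err_def
    by (intro tendsto_add tendsto_diff tendsto_const tendsto_sum tendsto_mult ln_error_tendsto_zero
        entropy_tendsto conv M_pos)
  moreover have "ln (sym_partition g \<xi> N) / real N \<le> u N" if N: "N > 0" for N
  proof -
    have "err N * real N = ln (real N + 1) + 1" using N by (simp add: err_def)
    moreover have "u N * real N = real N * (pressure g - (\<Sum>i\<in>UNIV. entropy (seq_type (\<xi> N i))))
        + real CARD('i) * real CARD('a) * (err N * real N)"
      by (simp add: u_def algebra_simps)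
    ultimately have "ln (sym_partition g \<xi> N) \<le> u N * real N"
      using ln_sym_partition_upper[of \<xi> N g, OF len N] by simp
    then show ?thesis using N by (simp add: pos_divide_le_eq)
  qed
  ultimately show ?thesis
    by (intro Limsup_le_lim[of _ u]) (auto simp: eventually_at_top_linorder intro!: exI[of _ 1])
qed

lemma approx_seq_deviation:
  fixes \<xi> :: "nat \<Rightarrow> 'i::finite \<Rightarrow> 'a::{finite,linorder} list" and M :: "'i \<Rightarrow> 'a \<Rightarrow> real"
  assumes "approx_seq \<xi> M"
  obtains \<delta> where "\<delta> \<longlonglongrightarrow> 0" and "\<And>N i t. \<bar>seq_type (\<xi> N i) t - M i t\<bar> \<le> \<delta> N"
proof
  define \<delta> where "\<delta> N = (\<Sum>i\<in>UNIV. \<Sum>t\<in>UNIV. \<bar>seq_type (\<xi> N i) t - M i t\<bar>)" for N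
  have "(\<lambda>N. \<Sum>i\<in>UNIV. \<Sum>t\<in>UNIV. \<bar>seq_type (\<xi> N i) t - M i t\<bar>)
      \<longlonglongrightarrow> (\<Sum>i\<in>(UNIV::'i set). \<Sum>t\<in>(UNIV::'a set). \<bar>M i t - M i t\<bar>)"
    using assms unfolding approx_seq_def by (intro tendsto_sum tendsto_rabs tendsto_diff tendsto_const) auto
  then show "\<delta> \<longlonglongrightarrow> 0" by (simp add: \<delta>_def[abs_def])
  fix N i t
  have "\<bar>seq_type (\<xi> N i) t - M i t\<bar> \<le> (\<Sum>t\<in>UNIV. \<bar>seq_type (\<xi> N i) t - M i t\<bar>)"
    by (rule member_le_sum) auto
  also have "\<dots> \<le> \<delta> N" unfolding \<delta>_def
    by (rule member_le_sum[where f = "\<lambda>i. \<Sum>t\<in>UNIV. \<bar>seq_type (\<xi> N i) t - M i t\<bar>"])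
       (auto intro: sum_nonneg)
  finally show "\<bar>seq_type (\<xi> N i) t - M i t\<bar> \<le> \<delta> N" .
qed

lemma empirical_tendsto_of_count_bounds:
  fixes K :: "nat \<Rightarrow> 'b multiset" and \<delta> :: "nat \<Rightarrow> real"
  assumes \<delta>_lim: "\<delta> \<longlonglongrightarrow> 0"
    and bounds: "eventually (\<lambda>N. N > 0 \<and> size (K N) = N \<and>
        real N * (p - \<delta> N) - 1 \<le> real (count (K N) x) \<and>
        real (count (K N) x) \<le> real N * p + real N * \<delta> N * C + C) sequentially"
  shows "(\<lambda>N. empirical (K N) x) \<longlonglongrightarrow> p"
proof (rule tendsto_sandwich)
  show "eventually (\<lambda>N. p - \<delta> N - 1 / real N \<le> empirical (K N) x) sequentially"
    using bounds
  proof eventually_elim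
    case (elim N)
    then have "(real N * (p - \<delta> N) - 1) / real N \<le> real (count (K N) x) / real N"
      by (intro divide_right_mono) auto
    moreover have "(real N * (p - \<delta> N) - 1) / real N = p - \<delta> N - 1 / real N"
      using elim by (simp add: field_simps)
    ultimately show ?case using elim by (simp add: empirical_def)
  qed
  show "eventually (\<lambda>N. empirical (K N) x \<le> p + \<delta> N * C + C / real N) sequentially"
    using bounds
  proof eventually_elim
    case (elim N)
    then have "real (count (K N) x) / real N \<le> (real N * p + real N * \<delta> N * C + C) / real N"
      by (intro divide_right_mono) auto
    moreover have "(real N * p + real N * \<delta> N * C + C) / real N = p + \<delta> N * C + C / real N"
      using elim by (simp add: field_simps)
    ultimately show ?case using elim by (simp add: empirical_def)
  qed
  have "(\<lambda>N. p - \<delta> N - 1 / real N) \<longlonglongrightarrow> p - 0 - 0"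
    by (intro tendsto_diff tendsto_const \<delta>_lim lim_inverse_n')
  then show "(\<lambda>N. p - \<delta> N - 1 / real N) \<longlonglongrightarrow> p" by simp
  have "(\<lambda>N. p + \<delta> N * C + C / real N) \<longlonglongrightarrow> p + 0 * C + 0"
    by (intro tendsto_add tendsto_const tendsto_mult \<delta>_lim) real_asymp
  then show "(\<lambda>N. p + \<delta> N * C + C / real N) \<longlonglongrightarrow> p" by simp
qed

lemma coupling_sequence:
  fixes \<gamma> :: "('i::finite \<Rightarrow> 'a::{finite,linorder}) \<Rightarrow> real"
  assumes ap: "approx_seq \<xi> (marginal \<gamma>)" and prob: "is_prob \<gamma>" and pos: "\<And>x. \<gamma> x > 0"
  obtains K where
    "eventually (\<lambda>N. N > 0 \<and> size (K N) = N \<and> (\<forall>i. image_mset (\<lambda>x. x i) (K N) = mset (\<xi> N i))) sequentially"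
    and "\<And>x. (\<lambda>N. empirical (K N) x) \<longlonglongrightarrow> \<gamma> x"
proof -
  let ?C = "real CARD('i \<Rightarrow> 'a)"
  have len: "\<And>N i. length (\<xi> N i) = N" using ap by (simp add: approx_seq_def)
  obtain \<delta> where \<delta>_lim: "\<delta> \<longlonglongrightarrow> 0" and \<delta>: "\<And>N i t. \<bar>seq_type (\<xi> N i) t - marginal \<gamma> i t\<bar> \<le> \<delta> N"
    using approx_seq_deviation[OF ap] by blast
  have \<delta>_nonneg: "0 \<le> \<delta> N" for N using \<delta>[of N undefined undefined] by linarith
  define \<gamma>_min where "\<gamma>_min = Min (range \<gamma>)"
  have \<gamma>_min: "\<gamma>_min \<le> \<gamma> x" "\<gamma>_min > 0" for x
    unfolding \<gamma>_min_def using pos by (auto intro: Min_le simp: Min_gr_iff)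
  define good where "good N K \<longleftrightarrow> size K = N \<and> (\<forall>i. image_mset (\<lambda>x. x i) K = mset (\<xi> N i)) \<and>
     (\<forall>x. real N * (\<gamma> x - \<delta> N) - 1 \<le> real (count K x) \<and>
          real (count K x) \<le> real N * \<gamma> x + real N * \<delta> N * ?C + ?C)" for N K
  define K where "K N = (SOME K. good N K)" for N
  have ev: "eventually (\<lambda>N. N > 0 \<and> good N (K N)) sequentially"
  proof -
    have "eventually (\<lambda>N. \<delta> N < \<gamma>_min) sequentially" using order_tendstoD(2)[OF \<delta>_lim \<gamma>_min(2)] .
    then show ?thesis using eventually_gt_at_top[of "0::nat"]
    proof eventually_elim
      case (elim N)
      have counts: "real N * (marginal \<gamma> i t - \<delta> N) \<le> real (count (mset (\<xi> N i)) t)" for i t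
      proof -
        have "marginal \<gamma> i t - \<delta> N \<le> seq_type (\<xi> N i) t" using \<delta>[of N i t] by linarith
        then have "real N * (marginal \<gamma> i t - \<delta> N) \<le> real N * seq_type (\<xi> N i) t"
          by (rule mult_left_mono) simp
        also have "\<dots> = real (count (mset (\<xi> N i)) t)"
          using elim len[of N i] by (simp add: seq_type_def count_mset)
        finally show ?thesis .
      qed
      have "\<exists>K. good N K" unfolding good_def
      proof (rule coupling_with_marginals[OF len[of N] _ _ \<delta>_nonneg counts])
        show "(\<Sum>x\<in>UNIV. \<gamma> x) = 1" using prob by (simp add: is_prob_def)
        show "\<delta> N \<le> \<gamma> x" for x using elim \<gamma>_min(1)[of x] by linarith
      qed
      then have "good N (K N)" unfolding K_def by (rule someI_ex)
      then show ?case using elim by blast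
    qed
  qed
  have "(\<lambda>N. empirical (K N) x) \<longlonglongrightarrow> \<gamma> x" for x
  proof (rule empirical_tendsto_of_count_bounds[where C = ?C, OF \<delta>_lim])
    show "eventually (\<lambda>N. N > 0 \<and> size (K N) = N \<and> real N * (\<gamma> x - \<delta> N) - 1 \<le> real (count (K N) x) \<and>
        real (count (K N) x) \<le> real N * \<gamma> x + real N * \<delta> N * ?C + ?C) sequentially"
      using ev by eventually_elim (auto simp: good_def)
  qed
  moreover have "eventually (\<lambda>N. N > 0 \<and> size (K N) = N \<and> (\<forall>i. image_mset (\<lambda>x. x i) (K N) = mset (\<xi> N i))) sequentially"
    using ev by eventually_elim (simp add: good_def)
  ultimately show thesis using that by blast
qed

lemma limsup_sym_partition_lower:
  fixes g \<gamma> :: "('i::finite \<Rightarrow> 'a::{finite,linorder}) \<Rightarrow> real"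
  assumes ap: "approx_seq \<xi> (marginal \<gamma>)" and prob: "is_prob \<gamma>" and pos: "\<And>x. \<gamma> x > 0"
  shows "ereal (integ \<gamma> g + entropy \<gamma> - (\<Sum>i\<in>UNIV. entropy (marginal \<gamma> i)))
     \<le> limsup (\<lambda>N. ereal (ln (sym_partition g \<xi> N) / real N))"
proof -
  have len: "\<And>N i. length (\<xi> N i) = N"
    and conv: "\<And>i t. (\<lambda>N. seq_type (\<xi> N i) t) \<longlonglongrightarrow> marginal \<gamma> i t"
    using ap by (auto simp: approx_seq_def)
  obtain K where ev: "eventually (\<lambda>N. N > 0 \<and> size (K N) = N \<and>
      (\<forall>i. image_mset (\<lambda>x. x i) (K N) = mset (\<xi> N i))) sequentially"
    and K_lim: "\<And>x. (\<lambda>N. empirical (K N) x) \<longlonglongrightarrow> \<gamma> x"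
    using coupling_sequence[OF ap prob pos] by blast
  define err where "err N = (ln (real N + 1) + 1) / real N" for N
  define l where "l N = entropy (empirical (K N)) + (\<Sum>x\<in>UNIV. empirical (K N) x * g x)
      - (\<Sum>i\<in>UNIV. entropy (seq_type (\<xi> N i))) - (real CARD('i \<Rightarrow> 'a) + real CARD('i)) * err N" for N
  have "l \<longlonglongrightarrow> entropy \<gamma> + (\<Sum>x\<in>UNIV. \<gamma> x * g x) - (\<Sum>i\<in>UNIV. entropy (marginal \<gamma> i))
      - (real CARD('i \<Rightarrow> 'a) + real CARD('i)) * 0"
    unfolding l_def[abs_def] err_def
    by (intro tendsto_add tendsto_diff tendsto_const tendsto_sum tendsto_mult ln_error_tendsto_zero
        entropy_tendsto conv K_lim pos marginal_pos)
  then have "l \<longlonglongrightarrow> integ \<gamma> g + entropy \<gamma> - (\<Sum>i\<in>UNIV. entropy (marginal \<gamma> i))"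
    by (simp add: integ_def mult.commute add.commute)
  moreover have "eventually (\<lambda>N. l N \<le> ln (sym_partition g \<xi> N) / real N) sequentially"
    using ev
  proof eventually_elim
    case (elim N)
    then have N: "real N > 0" by simp
    have "err N * real N = ln (real N + 1) + 1" using N by (simp add: err_def)
    moreover have "l N * real N = real N * (entropy (empirical (K N)) + (\<Sum>x\<in>UNIV. empirical (K N) x * g x)
          - (\<Sum>i\<in>UNIV. entropy (seq_type (\<xi> N i))))
        - (real CARD('i \<Rightarrow> 'a) + real CARD('i)) * (err N * real N)"
      by (simp add: l_def algebra_simps)
    ultimately have "l N * real N \<le> ln (sym_partition g \<xi> N)"
      using ln_sym_partition_lower[of \<xi> N "K N" g, OF len] elim by simp
    then show ?case using N by (simp add: pos_le_divide_eq)
  qed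
  ultimately show ?thesis by (intro lim_le_Limsup)
qed

lemma Psym_bounds:
  fixes \<gamma> :: "('i::finite \<Rightarrow> 'a::{finite,linorder}) \<Rightarrow> real"
  assumes prob: "is_prob \<gamma>" and pos: "\<And>x. \<gamma> x > 0"
  defines "S \<equiv> \<Sum>i\<in>UNIV. entropy (marginal \<gamma> i)"
  obtains F where "\<And>g. Psym g (marginal \<gamma>) = ereal (F g)"
    and "\<And>g. integ \<gamma> g + entropy \<gamma> - S \<le> F g"
    and "\<And>g. F g \<le> pressure g - S"
proof -
  have "\<exists>\<xi>. approx_seq \<xi> (marginal \<gamma>)"
    by (intro approx_seq_exists marginal_prob[OF prob])
  then have ap: "approx_seq (SOME \<xi>. approx_seq \<xi> (marginal \<gamma>)) (marginal \<gamma>)" by (rule someI_ex)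
  have lower: "ereal (integ \<gamma> g + entropy \<gamma> - S) \<le> Psym g (marginal \<gamma>)" for g
    unfolding Psym_def Let_def S_def by (rule limsup_sym_partition_lower[OF ap prob pos])
  have upper: "Psym g (marginal \<gamma>) \<le> ereal (pressure g - S)" for g
    unfolding Psym_def Let_def S_def by (rule limsup_sym_partition_upper[OF ap marginal_pos[OF pos]])
  have Psym_real: "Psym g (marginal \<gamma>) = ereal (real_of_ereal (Psym g (marginal \<gamma>)))" for g
    using lower[of g] upper[of g] by (cases "Psym g (marginal \<gamma>)") auto
  show thesis
  proof (rule that)
    show "Psym g (marginal \<gamma>) = ereal (real_of_ereal (Psym g (marginal \<gamma>)))" for g
      by (rule Psym_real)
    show "integ \<gamma> g + entropy \<gamma> - S \<le> real_of_ereal (Psym g (marginal \<gamma>))" for g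
      using lower[of g] by (subst (asm) Psym_real) simp
    show "real_of_ereal (Psym g (marginal \<gamma>)) \<le> pressure g - S" for g
      using upper[of g] by (subst (asm) Psym_real) simp
  qed
qed

lemma mutual_equilibrium_iff_maximiser:
  fixes \<mu> h :: "('i::finite \<Rightarrow> 'a::{finite,linorder}) \<Rightarrow> real"
  assumes Psym_real: "\<And>g. Psym g (marginal \<mu>) = ereal (F g)"
  shows "mutual_equilibrium \<mu> h \<longleftrightarrow> (\<forall>g. integ \<mu> g - F g \<le> integ \<mu> h - F h)"
proof -
  have Isym: "Isym \<mu> = (SUP g. ereal (integ \<mu> g - F g))"
    unfolding Isym_def Psym_real by simp
  have upper: "ereal (integ \<mu> g - F g) \<le> Isym \<mu>" for g
    unfolding Isym by (rule SUP_upper) simp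
  show ?thesis
    unfolding mutual_equilibrium_def Psym_real ereal_minus(1)
  proof
    assume "Isym \<mu> = ereal (integ \<mu> h - F h)"
    then show "\<forall>g. integ \<mu> g - F g \<le> integ \<mu> h - F h" using upper by simp
  next
    assume max: "\<forall>g. integ \<mu> g - F g \<le> integ \<mu> h - F h"
    have "Isym \<mu> \<le> ereal (integ \<mu> h - F h)"
      unfolding Isym by (rule SUP_least) (simp add: max)
    then show "Isym \<mu> = ereal (integ \<mu> h - F h)" using upper[of h] by (rule antisym)
  qed
qed

text \<open>(i) \<open>\<Rightarrow>\<close> (ii): at \<open>\<gamma> = gibbs h\<close> the lower bound at any \<open>g\<close> and the upper bound at \<open>h\<close>
  show that \<open>h\<close> maximises \<open>g \<mapsto> \<gamma>(g) - P\<^sub>s\<^sub>y\<^sub>m(g)\<close>.\<close>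

lemma gibbs_mutual_equilibrium:
  fixes h :: "('i::finite \<Rightarrow> 'a::{finite,linorder}) \<Rightarrow> real"
  shows "mutual_equilibrium (gibbs h) h"
proof -
  obtain F where Psym_real: "\<And>g. Psym g (marginal (gibbs h)) = ereal (F g)"
    and lower: "\<And>g. integ (gibbs h) g + entropy (gibbs h) - (\<Sum>i\<in>UNIV. entropy (marginal (gibbs h) i)) \<le> F g"
    and upper: "\<And>g. F g \<le> pressure g - (\<Sum>i\<in>UNIV. entropy (marginal (gibbs h) i))"
    using Psym_bounds[OF gibbs_prob gibbs_pos, of h] by blast
  have "integ (gibbs h) g - F g \<le> integ (gibbs h) h - F h" for g
    using lower[of g] upper[of h] gibbs_free_energy[of h] by linarith
  then show ?thesis by (simp add: mutual_equilibrium_iff_maximiser[OF Psym_real])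
qed

text \<open>(ii) \<open>\<Rightarrow>\<close> (i): with the marginals of \<open>gibbs h\<close>, the upper bound at any \<open>g\<close> and the
  lower bound at \<open>h\<close> turn the equilibrium property into the variational principle.\<close>

lemma mutual_equilibrium_imp_gibbs:
  fixes \<mu> h :: "('i::finite \<Rightarrow> 'a::{finite,linorder}) \<Rightarrow> real"
  assumes prob: "is_prob \<mu>" and marg: "marginal \<mu> = marginal (gibbs h)"
    and eq: "mutual_equilibrium \<mu> h"
  shows "\<mu> = gibbs h"
proof (rule gibbs_unique[OF prob])
  obtain F where Psym_real: "\<And>g. Psym g (marginal (gibbs h)) = ereal (F g)"
    and lower: "\<And>g. integ (gibbs h) g + entropy (gibbs h) - (\<Sum>i\<in>UNIV. entropy (marginal (gibbs h) i)) \<le> F g"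
    and upper: "\<And>g. F g \<le> pressure g - (\<Sum>i\<in>UNIV. entropy (marginal (gibbs h) i))"
    using Psym_bounds[OF gibbs_prob gibbs_pos, of h] by blast
  have maximiser: "integ \<mu> g - F g \<le> integ \<mu> h - F h" for g
    using eq mutual_equilibrium_iff_maximiser[of \<mu> F h] Psym_real unfolding marg by blast
  show "integ \<mu> g - pressure g \<le> integ \<mu> h - pressure h" for g
    using maximiser[of g] upper[of g] lower[of h] gibbs_free_energy[of h] by linarith
qed

theorem proposition4p6:
  fixes h :: "('i::finite \<Rightarrow> 'a::{finite,linorder}) \<Rightarrow> real"
    and \<mu> :: "('i \<Rightarrow> 'a) \<Rightarrow> real"
  assumes "is_prob \<mu>"
  shows "\<mu> = gibbs h \<longleftrightarrow>
           (mutual_equilibrium \<mu> h \<and> (\<forall>i. marginal \<mu> i = gibbs (hmarg h i)))"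
proof
  assume "\<mu> = gibbs h"
  then show "mutual_equilibrium \<mu> h \<and> (\<forall>i. marginal \<mu> i = gibbs (hmarg h i))"
    using gibbs_mutual_equilibrium gibbs_marginal by blast
next
  assume ii: "mutual_equilibrium \<mu> h \<and> (\<forall>i. marginal \<mu> i = gibbs (hmarg h i))"
  then have "marginal \<mu> = marginal (gibbs h)" by (simp add: fun_eq_iff gibbs_marginal)
  then show "\<mu> = gibbs h" using ii assms by (intro mutual_equilibrium_imp_gibbs) auto
qed

end
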